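(* Let $r\in(0,1]$ and assume every valuation $v_i$ is homogeneous of degree $r$, concave, and differentiable. Fix $\rho\in(0,1]$. Then for any allocation $\mathbf{x}$, we have $\mathbf{x}\in\Psi(\rho)$ if and only if there exist $q_1,\dots,q_m\in\mathbb{R}_{\ge 0}$ such that, for the pricing rule \[ p(y)=\rho\, r^{\frac{\rho-1}{\rho}}\Big(\sum_{j\in M}q_j y_j\Big)^{1/\rho}\qquad (y\in\mathbb{R}^m_{\ge0}), \] $(\mathbf{x},p)$ is a Walrasian equilibrium. Furthermore, such $q_1,\dots,q_m$ are optimal Lagrange multipliers for Program $(P_\rho)$.
   Context: Setup: agents $N=\{1,\dots,n\}$, divisible goods $M=\{1,\dots,m\}$, each of supply $1$. An allocation is $\mathbf{x}=(x_1,\dots,x_n)$ with bundles $x_i\in\mathbb{R}^m_{\ge0}$ ($x_{ij}$ = amount of good $j$ given to agent $i$) satisfying $\sum_i x_{ij}\le 1$ for all $j$. Each agent $i$ has a valuation $v_i:\mathbb{R}^m_{\ge0}\to\mathbb{R}_{\ge0}$ that is monotone (coordinatewise larger bundles have weakly larger value), normalized ($v_i(0)=0$), and not identically zero. $v_i$ is homogeneous of degree $r$ if $v_i(\lambda y)=\lambda^r v_i(y)$ for all $\lambda\ge0$ and bundles $y$. Agents have quasilinear utility: under a pricing rule $p:\mathbb{R}^m_{\ge0}\to\mathbb{R}$, agent $i$'s demand set is $D_i(p)=\arg\max_{y\in\mathbb{R}^m_{\ge0}}(v_i(y)-p(y))$. Good $j$ has nonzero cost under $p$ if there is a bundle $y$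 with $y_\ell=0$ for all $\ell\ne j$ and $p(y)>0$. $(\mathbf{x},p)$ is a Walrasian equilibrium (WE) if $x_i\in D_i(p)$ for every $i$, $\sum_i x_{ij}\le 1$ for every $j$, and $\sum_i x_{ij}=1$ for every good $j$ of nonzero cost. For $\rho\in(0,1]$, $\Psi(\rho)$ is the set of allocations maximizing the CES welfare $\Phi(\rho,\mathbf{x})=(\sum_{i}v_i(x_i)^\rho)^{1/\rho}$ over all allocations. Program $(P_\rho)$: maximize $\frac1\rho\sum_i v_i(x_i)^\rho$ over $\mathbf{x}\in\mathbb{R}^{n\times m}_{\ge0}$ subject to $\sum_i x_{ij}\le1$ for all $j$. For differentiable $v_i$, $q\in\mathbb{R}^m_{\ge0}$ is a vector of optimal Lagrange multipliers for $(P_\rho)$ if there is an optimal $\mathbf{x}$ such that (i) for all $i,j$: $v_i(x_i)^{\rho-1}\frac{\partial v_i(x_i)}{\partial x_{ij}}\le q_j$, with equality whenever $x_{ij}>0$; and (ii) $q_j=0$ whenever $\sum_i x_{ij}<1$. *)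

theory Defs
  imports "HOL-Analysis.Analysis"
begin

text \<open>Agents are the elements of a finite type 'a, goods the elements of a finite
  type 'm; a bundle is a vector in real^'m with nonnegative entries.\<close>

definition orthant :: "(real^'m) set" where
  "orthant = {y. \<forall>j. 0 \<le> y $ j}"

definition valuation :: "(real^'m \<Rightarrow> real) \<Rightarrow> bool" where
  "valuation v \<longleftrightarrow>
     (\<forall>y\<in>orthant. \<forall>z\<in>orthant. (\<forall>j. y $ j \<le> z $ j) \<longrightarrow> v y \<le> v z) \<and>
     v 0 = 0 \<and> (\<forall>y\<in>orthant. 0 \<le> v y) \<and> (\<exists>y\<in>orthant. v y \<noteq> 0)"

definition homogeneous :: "real \<Rightarrow> (real^'m \<Rightarrow> real) \<Rightarrow> bool" where
  "homogeneous r v \<longleftrightarrow> (\<forall>c\<ge>0. \<forall>y\<in>orthant. v (c *\<^sub>R y) = c powr r * v y)"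

definition allocation :: "('a::finite \<Rightarrow> real^'m::finite) \<Rightarrow> bool" where
  "allocation x \<longleftrightarrow> (\<forall>i. x i \<in> orthant) \<and> (\<forall>j. (\<Sum>i\<in>UNIV. x i $ j) \<le> 1)"

definition demand :: "(real^'m \<Rightarrow> real) \<Rightarrow> (real^'m \<Rightarrow> real) \<Rightarrow> (real^'m) set" where
  "demand v p = {y \<in> orthant. \<forall>z\<in>orthant. v z - p z \<le> v y - p y}"

definition nonzero_cost :: "(real^'m \<Rightarrow> real) \<Rightarrow> 'm \<Rightarrow> bool" where
  "nonzero_cost p j \<longleftrightarrow> (\<exists>y\<in>orthant. (\<forall>l. l \<noteq> j \<longrightarrow> y $ l = 0) \<and> p y > 0)"

definition walrasian_eq ::
  "('a::finite \<Rightarrow> real^'m \<Rightarrow> real) \<Rightarrow> ('a \<Rightarrow> real^'m::finite) \<Rightarrow> (real^'m \<Rightarrow> real) \<Rightarrow> bool" where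
  "walrasian_eq v x p \<longleftrightarrow>
     (\<forall>i. x i \<in> demand (v i) p) \<and>
     (\<forall>j. (\<Sum>i\<in>UNIV. x i $ j) \<le> 1) \<and>
     (\<forall>j. nonzero_cost p j \<longrightarrow> (\<Sum>i\<in>UNIV. x i $ j) = 1)"

definition ces_welfare :: "('a::finite \<Rightarrow> real^'m \<Rightarrow> real) \<Rightarrow> real \<Rightarrow> ('a \<Rightarrow> real^'m) \<Rightarrow> real" where
  "ces_welfare v \<rho> x = (\<Sum>i\<in>UNIV. (v i (x i)) powr \<rho>) powr (1 / \<rho>)"

definition Psi :: "('a::finite \<Rightarrow> real^'m::finite \<Rightarrow> real) \<Rightarrow> real \<Rightarrow> ('a \<Rightarrow> real^'m) set" where
  "Psi v \<rho> = {x. allocation x \<and> (\<forall>x'. allocation x' \<longrightarrow> ces_welfare v \<rho> x' \<le> ces_welfare v \<rho> x)}"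

definition P_obj :: "('a::finite \<Rightarrow> real^'m \<Rightarrow> real) \<Rightarrow> real \<Rightarrow> ('a \<Rightarrow> real^'m) \<Rightarrow> real" where
  "P_obj v \<rho> x = (1 / \<rho>) * (\<Sum>i\<in>UNIV. (v i (x i)) powr \<rho>)"

definition P_optimal :: "('a::finite \<Rightarrow> real^'m::finite \<Rightarrow> real) \<Rightarrow> real \<Rightarrow> ('a \<Rightarrow> real^'m) \<Rightarrow> bool" where
  "P_optimal v \<rho> x \<longleftrightarrow> allocation x \<and> (\<forall>x'. allocation x' \<longrightarrow> P_obj v \<rho> x' \<le> P_obj v \<rho> x)"

definition partial_deriv :: "(real^'m \<Rightarrow> real) \<Rightarrow> real^'m \<Rightarrow> 'm \<Rightarrow> real \<Rightarrow> bool" where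
  "partial_deriv v y j d \<longleftrightarrow>
     ((\<lambda>t. v (y + t *\<^sub>R axis j 1)) has_real_derivative d) (at 0 within {0..})"

definition optimal_lagrange ::
  "('a::finite \<Rightarrow> real^'m::finite \<Rightarrow> real) \<Rightarrow> real \<Rightarrow> real^'m \<Rightarrow> bool" where
  "optimal_lagrange v \<rho> q \<longleftrightarrow> q \<in> orthant \<and>
     (\<exists>x. P_optimal v \<rho> x \<and>
        (\<forall>i j. \<exists>d. partial_deriv (v i) (x i) j d \<and>
            (v i (x i)) powr (\<rho> - 1) * d \<le> q $ j \<and>
            (x i $ j > 0 \<longrightarrow> (v i (x i)) powr (\<rho> - 1) * d = q $ j)) \<and>
        (\<forall>j. (\<Sum>i\<in>UNIV. x i $ j) < 1 \<longrightarrow> q $ j = 0))"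

definition ces_price :: "real \<Rightarrow> real \<Rightarrow> real^'m::finite \<Rightarrow> real^'m \<Rightarrow> real" where
  "ces_price r \<rho> q y = \<rho> * r powr ((\<rho> - 1) / \<rho>) * (\<Sum>j\<in>UNIV. q $ j * y $ j) powr (1 / \<rho>)"

end

theory Submission
  imports Defs
begin

text \<open>Let \<open>u\<^sub>i = v\<^sub>i\<^sup>\<rho>/\<rho>\<close>; these are concave, and \<open>(P\<^sub>\<rho>)\<close> maximises \<open>\<Sum>\<^sub>i u\<^sub>i\<close>, a monotone transform of
  the CES welfare. By the first and second welfare theorems for linear prices (the second one being
  Lagrangian duality under Slater's condition), the maximisers are exactly the equilibria of the
  \<open>u\<^sub>i\<close> at linear prices \<open>q \<ge> 0\<close>, and \<open>q\<close> is a Lagrange multiplier. So it suffices that each agent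
  demands the same bundles for \<open>v\<^sub>i\<close> at the price \<open>p\<close> as for \<open>u\<^sub>i\<close> at the prices \<open>q\<close>. Both pairs are
  homogeneous, of degrees \<open>(r, 1/\<rho>)\<close> and \<open>(r\<rho>, 1)\<close>, with the price growing at least as fast as the
  value; for such pairs a bundle of positive value is demanded iff it is cheapest on its level set
  and optimal along its ray, and these conditions agree for the two pairs. The Karush-Kuhn-Tucker
  conditions are the first-order conditions of the demand for \<open>u\<^sub>i\<close> at the prices \<open>q\<close>.\<close>

lemma orthant_scaleR: "0 \<le> c \<Longrightarrow> y \<in> orthant \<Longrightarrow> c *\<^sub>R y \<in> orthant"
  by (simp add: orthant_def)

lemma inner_orthant_nonneg: "q \<in> orthant \<Longrightarrow> y \<in> orthant \<Longrightarrow> 0 \<le> q \<bullet> y"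
  by (auto simp: orthant_def inner_vec_def intro!: sum_nonneg)

lemma ces_price_eq_inner: "ces_price r \<rho> q y = \<rho> * r powr ((\<rho> - 1) / \<rho>) * (q \<bullet> y) powr (1 / \<rho>)"
  by (simp add: ces_price_def inner_vec_def)

lemma homogeneous_inner: "homogeneous 1 (inner q)"
  by (simp add: homogeneous_def)

lemma homogeneous_ces_price:
  assumes "q \<in> orthant"
  shows "homogeneous (1 / \<rho>) (ces_price r \<rho> q)"
  unfolding homogeneous_def ces_price_eq_inner
  using inner_orthant_nonneg[OF assms] by (simp add: powr_mult)

lemma homogeneous_powr_div:
  assumes "homogeneous r v" and "\<And>y. y \<in> orthant \<Longrightarrow> 0 \<le> v y"
  shows "homogeneous (r * \<rho>) (\<lambda>y. v y powr \<rho> / \<rho>)"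
  using assms by (simp add: homogeneous_def powr_mult powr_powr)

lemma powr_le_powr_iff:
  fixes x y a :: real
  assumes "0 < a" "0 \<le> x" "0 \<le> y"
  shows "x powr a \<le> y powr a \<longleftrightarrow> x \<le> y"
  using assms by (meson not_le powr_less_mono2 powr_mono2 less_imp_le)

lemma powr_eq_powr_iff:
  fixes x y a :: real
  assumes "0 < a" "0 \<le> x" "0 \<le> y"
  shows "x powr a = y powr a \<longleftrightarrow> x = y"
  using powr_le_powr_iff[OF assms] powr_le_powr_iff[OF assms(1,3,2)] by (auto intro: order.antisym)

lemma ces_price_balance_iff:
  fixes B V r \<rho> :: real
  assumes "0 \<le> B" "0 \<le> V" "0 < r" "0 < \<rho>"
  shows "r * V = 1 / \<rho> * (\<rho> * r powr ((\<rho> - 1) / \<rho>) * B powr (1 / \<rho>)) \<longleftrightarrow> B = r * V powr \<rho>"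
proof -
  have "r powr ((\<rho> - 1) / \<rho>) * (r * V powr \<rho>) powr (1 / \<rho>) = r powr ((\<rho> - 1) / \<rho> + 1 / \<rho>) * V"
    using assms by (simp add: powr_mult powr_powr powr_add)
  also have "(\<rho> - 1) / \<rho> + 1 / \<rho> = 1"
    using assms by (simp add: field_simps)
  finally have rV: "r * V = r powr ((\<rho> - 1) / \<rho>) * (r * V powr \<rho>) powr (1 / \<rho>)"
    using assms by simp
  have "r * V = 1 / \<rho> * (\<rho> * r powr ((\<rho> - 1) / \<rho>) * B powr (1 / \<rho>))
        \<longleftrightarrow> (r * V powr \<rho>) powr (1 / \<rho>) = B powr (1 / \<rho>)"
    unfolding rV using assms by auto
  also have "\<dots> \<longleftrightarrow> B = r * V powr \<rho>"
    using assms by (subst powr_eq_powr_iff) auto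
  finally show ?thesis .
qed

lemma bernoulli_inequality_powr:
  fixes t k :: real
  assumes "0 \<le> t" "1 \<le> k"
  shows "1 + k * (t - 1) \<le> t powr k"
proof (cases "t = 0")
  case True
  with assms show ?thesis by (simp add: algebra_simps)
next
  case False
  with assms have "(t powr k) powr (1/k) * 1 powr (1 - 1/k) \<le> (1/k) * t powr k + (1 - 1/k) * 1"
    by (intro Youngs_inequality_0) auto
  moreover have "(t powr k) powr (1/k) = t"
    using assms by (simp add: powr_powr)
  ultimately have "t \<le> t powr k / k + (1 - 1/k)"
    by simp
  then have "k * t \<le> k * (t powr k / k + (1 - 1/k))"
    using assms by (intro mult_left_mono) auto
  then show ?thesis
    using assms by (simp add: algebra_simps)
qed

lemma mult_lt_1_unless_both_1:
  fixes r \<rho> :: real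
  assumes "0 < r" "r \<le> 1" "0 < \<rho>" "\<rho> \<le> 1" "\<not> (r = 1 \<and> \<rho> = 1)"
  shows "r * \<rho> < 1"
proof -
  have "r * \<rho> \<le> r" "r * \<rho> \<le> \<rho>"
    using assms by (auto intro: mult_right_le_one_le mult_left_le_one_le)
  with assms show ?thesis
    by linarith
qed

section \<open>Demand under homogeneous valuations and prices\<close>

lemma demand_balance:
  assumes hu: "homogeneous a u" and hP: "homogeneous b P" and x: "x \<in> demand u P"
  shows "a * u x = b * P x"
proof -
  define \<phi> where "\<phi> l = l powr a * u x - l powr b * P x" for l :: real
  have "\<phi> l \<le> \<phi> 1" if "\<bar>1 - l\<bar> < 1" for l
  proof -
    from that have "0 < l" by linarith
    with x have "u (l *\<^sub>R x) - P (l *\<^sub>R x) \<le> u x - P x"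
      by (auto simp: demand_def orthant_scaleR)
    with \<open>0 < l\<close> x hu hP show ?thesis
      by (simp add: \<phi>_def homogeneous_def demand_def)
  qed
  moreover have "(\<phi> has_real_derivative a * 1 powr (a - 1) * u x - b * 1 powr (b - 1) * P x) (at 1)"
    unfolding \<phi>_def by (rule derivative_eq_intros refl | simp)+
  ultimately have "a * 1 powr (a - 1) * u x - b * 1 powr (b - 1) * P x = 0"
    by (intro DERIV_local_max[where d = 1]) auto
  then show ?thesis
    by simp
qed

text \<open>A demanded bundle of value zero has surplus zero, while a small multiple of a bundle of
  positive value has positive surplus if the price vanishes faster than the value.\<close>
lemma demand_zero_value_degree_le:
  assumes hu: "homogeneous a u" and hP: "homogeneous b P" and "0 < b"
    and P_nonneg: "\<And>y. y \<in> orthant \<Longrightarrow> 0 \<le> P y"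
    and x: "x \<in> demand u P" "u x = 0" and y: "y \<in> orthant" "0 < u y"
  shows "b \<le> a"
proof (rule ccontr)
  assume "\<not> b \<le> a"
  have Px: "P x = 0"
    using demand_balance[OF hu hP x(1)] x(2) \<open>0 < b\<close> by simp
  define l where "l = (u y / (P y + 1)) powr (1 / (b - a))"
  have l: "0 < l" "l powr (b - a) = u y / (P y + 1)"
    using y P_nonneg[OF y(1)] \<open>\<not> b \<le> a\<close> by (auto simp: l_def powr_powr)
  have "u (l *\<^sub>R y) - P (l *\<^sub>R y) \<le> u x - P x"
    using x(1) y(1) l(1) by (auto simp: demand_def orthant_scaleR)
  then have "l powr a * u y \<le> l powr b * P y"
    using hu hP y(1) l(1) x(2) Px by (simp add: homogeneous_def)
  also have "l powr b = l powr a * l powr (b - a)"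
    by (simp flip: powr_add)
  finally have "u y \<le> l powr (b - a) * P y"
    using l(1) by (simp add: mult.assoc)
  then have "u y \<le> u y / (P y + 1) * P y"
    using l by simp
  moreover have "u y / (P y + 1) * P y < u y"
    using y(2) P_nonneg[OF y(1)] by (simp add: field_simps)
  ultimately show False
    by simp
qed

lemma level_min_rescaled:
  assumes hu: "homogeneous a u" and hP: "homogeneous b P" and "0 < a"
    and x: "0 < u x" and level_min: "\<And>y. y \<in> orthant \<Longrightarrow> u y = u x \<Longrightarrow> P x \<le> P y"
    and y: "y \<in> orthant" "0 < u y"
  shows "P x * (u y / u x) powr (b / a) \<le> P y"
proof -
  define \<mu> where "\<mu> = (u x / u y) powr (1 / a)"
  have \<mu>: "0 < \<mu>" "\<mu> powr a = u x / u y"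
    using x y \<open>0 < a\<close> by (auto simp: \<mu>_def powr_powr)
  have "u (\<mu> *\<^sub>R y) = u x"
    using hu y \<mu> by (simp add: homogeneous_def)
  then have "P x \<le> \<mu> powr b * P y"
    using level_min[of "\<mu> *\<^sub>R y"] hP y \<mu> by (simp add: homogeneous_def orthant_scaleR)
  also have "\<mu> powr b = (u x / u y) powr (b / a)"
    using x y by (simp add: \<mu>_def powr_powr)
  finally have "P x * (u y / u x) powr (b / a) \<le> (u x / u y) powr (b / a) * P y * (u y / u x) powr (b / a)"
    by (rule mult_right_mono) simp
  also have "\<dots> = (u x / u y) powr (b / a) * (u y / u x) powr (b / a) * P y"
    by (simp add: mult_ac)
  also have "(u x / u y) powr (b / a) * (u y / u x) powr (b / a) = 1"
    using x y by (simp flip: powr_mult)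
  finally show ?thesis
    by simp
qed

text \<open>The balance \<open>a * u x = b * P x\<close> is optimality along the ray through \<open>x\<close>. Conversely, a
  competitor rescaled onto the level set of \<open>x\<close> costs at least \<open>P x\<close>, and Bernoulli's inequality
  turns this into a bound on its surplus.\<close>
lemma demand_iff_balanced_level_min:
  fixes u P :: "real^'m::finite \<Rightarrow> real"
  assumes hu: "homogeneous a u" and hP: "homogeneous b P" and "0 < a" "a \<le> b"
    and P_nonneg: "\<And>y. y \<in> orthant \<Longrightarrow> 0 \<le> P y"
    and x: "x \<in> orthant" "0 < u x"
  shows "x \<in> demand u P \<longleftrightarrow> a * u x = b * P x \<and> (\<forall>y\<in>orthant. u y = u x \<longrightarrow> P x \<le> P y)"
proof
  assume "x \<in> demand u P"
  then show "a * u x = b * P x \<and> (\<forall>y\<in>orthant. u y = u x \<longrightarrow> P x \<le> P y)"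
    using demand_balance[OF hu hP] by (force simp: demand_def)
next
  assume "a * u x = b * P x \<and> (\<forall>y\<in>orthant. u y = u x \<longrightarrow> P x \<le> P y)"
  then have balance: "a * u x = b * P x" and level_min: "\<And>y. y \<in> orthant \<Longrightarrow> u y = u x \<Longrightarrow> P x \<le> P y"
    by auto
  define k where "k = b / a"
  have k: "1 \<le> k" and Px: "P x = u x / k"
    using balance \<open>0 < a\<close> \<open>a \<le> b\<close> by (auto simp: k_def field_simps)
  show "x \<in> demand u P"
    unfolding demand_def
  proof (intro CollectI conjI ballI x)
    fix y :: "real^'m" assume y: "y \<in> orthant"
    show "u y - P y \<le> u x - P x"
    proof (cases "0 < u y")
      case False
      moreover have "u x / k \<le> u x"
        using x(2) k by (simp add: divide_le_eq)
      ultimately show ?thesis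
        using P_nonneg[OF y] Px by linarith
    next
      case True
      define t where "t = u y / u x"
      have "u x / k * t powr k \<le> P y"
        using level_min_rescaled[OF hu hP \<open>0 < a\<close> x(2) level_min y True] Px
        by (simp add: t_def k_def)
      moreover have "u x / k * (1 + k * (t - 1)) \<le> u x / k * t powr k"
        using bernoulli_inequality_powr[of t k] k x(2) True by (intro mult_left_mono) (auto simp: t_def)
      moreover have "u x / k * (1 + k * (t - 1)) = u x / k + u y - u x"
        using x(2) k by (simp add: t_def field_simps)
      ultimately show ?thesis
        using Px by linarith
    qed
  qed
qed

text \<open>The constant \<open>\<rho> r\<^bsup>(\<rho>-1)/\<rho>\<^esup>\<close> in \<open>ces_price\<close> is what makes both ray conditions equivalent to
  \<open>q \<bullet> x = r v(x)\<^sup>\<rho>\<close>.\<close>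
lemma demand_ces_price_iff_linear_demand_pos:
  fixes v :: "real^'m::finite \<Rightarrow> real"
  assumes hom: "homogeneous r v" and v_nonneg: "\<And>y. y \<in> orthant \<Longrightarrow> 0 \<le> v y"
    and r: "0 < r" "r \<le> 1" and \<rho>: "0 < \<rho>" "\<rho> \<le> 1" and q: "q \<in> orthant"
    and x: "x \<in> orthant" "0 < v x"
  shows "x \<in> demand v (ces_price r \<rho> q) \<longleftrightarrow> x \<in> demand (\<lambda>y. v y powr \<rho> / \<rho>) (inner q)"
proof -
  have inner_nonneg: "\<And>y. y \<in> orthant \<Longrightarrow> 0 \<le> q \<bullet> y"
    using q by (rule inner_orthant_nonneg)
  have "r * \<rho> \<le> 1"
    using r \<rho> by (simp add: mult_le_one)
  have "\<forall>y\<in>orthant. (v y = v x) = (v y powr \<rho> / \<rho> = v x powr \<rho> / \<rho>)"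
    using v_nonneg x \<rho> by (simp add: powr_eq_powr_iff)
  moreover have "\<forall>y\<in>orthant. (ces_price r \<rho> q x \<le> ces_price r \<rho> q y) = (q \<bullet> x \<le> q \<bullet> y)"
    using inner_nonneg x r \<rho> by (simp add: ces_price_eq_inner powr_le_powr_iff)
  moreover have "r * v x = 1 / \<rho> * ces_price r \<rho> q x \<longleftrightarrow> r * \<rho> * (v x powr \<rho> / \<rho>) = 1 * (q \<bullet> x)"
    using ces_price_balance_iff[OF inner_nonneg[OF x(1)] v_nonneg[OF x(1)] r(1) \<rho>(1)] \<rho>
    by (auto simp: ces_price_eq_inner)
  ultimately show ?thesis
    using demand_iff_balanced_level_min[OF hom homogeneous_ces_price[OF q] _ _ _ x]
      demand_iff_balanced_level_min[OF homogeneous_powr_div[OF hom v_nonneg] homogeneous_inner _ _ inner_nonneg x(1)]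
      r \<rho> \<open>r * \<rho> \<le> 1\<close> x(2) q
    by (simp add: field_simps ces_price_eq_inner)
qed

text \<open>Away from \<open>r = \<rho> = 1\<close>, where the two demand problems coincide, bundles of value zero are in
  neither demand set.\<close>
lemma demand_ces_price_eq_linear_demand:
  fixes v :: "real^'m::finite \<Rightarrow> real"
  assumes val: "valuation v" and hom: "homogeneous r v"
    and r: "0 < r" "r \<le> 1" and \<rho>: "0 < \<rho>" "\<rho> \<le> 1" and q: "q \<in> orthant"
  shows "demand v (ces_price r \<rho> q) = demand (\<lambda>y. v y powr \<rho> / \<rho>) (inner q)"
proof -
  have v_nonneg: "\<And>y. y \<in> orthant \<Longrightarrow> 0 \<le> v y" and v_pos: "\<exists>y\<in>orthant. 0 < v y"
    using val unfolding valuation_def by (auto simp: order.strict_iff_order)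
  have inner_nonneg: "\<And>y. y \<in> orthant \<Longrightarrow> 0 \<le> q \<bullet> y"
    using q by (rule inner_orthant_nonneg)
  show ?thesis
  proof (cases "r = 1 \<and> \<rho> = 1")
    case True
    then show ?thesis
      using v_nonneg inner_nonneg by (auto simp: demand_def ces_price_eq_inner)
  next
    case False
    then have "r * \<rho> < 1"
      using mult_lt_1_unless_both_1 r \<rho> by blast
    obtain y where y: "y \<in> orthant" "0 < v y"
      using v_pos by blast
    have "x \<notin> demand v (ces_price r \<rho> q)" if "v x = 0" for x
      using demand_zero_value_degree_le[OF hom homogeneous_ces_price[OF q, where \<rho> = \<rho> and r = r] _ _ _ that y]
        \<open>r * \<rho> < 1\<close> \<rho> q
      by (auto simp: field_simps ces_price_eq_inner inner_orthant_nonneg)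
    moreover have "x \<notin> demand (\<lambda>y. v y powr \<rho> / \<rho>) (inner q)" if "v x = 0" for x
      using demand_zero_value_degree_le[OF homogeneous_powr_div[OF hom v_nonneg] homogeneous_inner _ inner_nonneg
          _ _ y(1)] that y(2) \<open>r * \<rho> < 1\<close> \<rho>
      by fastforce
    moreover have "x \<notin> demand u P" if "x \<notin> orthant" for x and u P :: "real^'m \<Rightarrow> real"
      using that by (simp add: demand_def)
    ultimately show ?thesis
      using demand_ces_price_iff_linear_demand_pos[OF hom v_nonneg r \<rho> q] v_nonneg
      by (metis order.not_eq_order_implies_strict set_eqI)
  qed
qed

section \<open>Welfare theorems for linear prices\<close>

definition welfare_max :: "('a::finite \<Rightarrow> real^'m::finite \<Rightarrow> real) \<Rightarrow> ('a \<Rightarrow> real^'m) \<Rightarrow> bool" where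
  "welfare_max u x \<longleftrightarrow> allocation x \<and> (\<forall>x'. allocation x' \<longrightarrow> (\<Sum>i\<in>UNIV. u i (x' i)) \<le> (\<Sum>i\<in>UNIV. u i (x i)))"

lemma P_optimal_iff_welfare_max:
  assumes "0 < \<rho>"
  shows "P_optimal v \<rho> x \<longleftrightarrow> welfare_max (\<lambda>i y. v i y powr \<rho> / \<rho>) x"
  using assms by (simp add: P_optimal_def P_obj_def welfare_max_def flip: sum_divide_distrib)

lemma Psi_iff_welfare_max:
  assumes "0 < \<rho>"
  shows "x \<in> Psi v \<rho> \<longleftrightarrow> welfare_max (\<lambda>i y. v i y powr \<rho> / \<rho>) x"
  using assms by (simp add: Psi_def ces_welfare_def welfare_max_def powr_le_powr_iff sum_nonneg
      divide_le_cancel flip: sum_divide_distrib)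

lemma nonzero_cost_inner:
  assumes "q \<in> orthant"
  shows "nonzero_cost (inner q) j \<longleftrightarrow> 0 < q $ j"
proof
  assume "nonzero_cost (inner q) j"
  then obtain y where y: "y \<in> orthant" "\<And>l. l \<noteq> j \<Longrightarrow> y $ l = 0" "0 < q \<bullet> y"
    unfolding nonzero_cost_def by blast
  have "q \<bullet> y = q $ j * y $ j"
    unfolding inner_vec_def using y(2) by (subst sum.remove[of _ j]) auto
  moreover have "0 \<le> q $ j" "0 \<le> y $ j"
    using assms y(1) by (auto simp: orthant_def)
  ultimately show "0 < q $ j"
    using y(3) by (auto simp: zero_less_mult_iff)
next
  assume "0 < q $ j"
  then show "nonzero_cost (inner q) j"
    unfolding nonzero_cost_def
    by (intro bexI[of _ "axis j 1"] conjI) (auto simp: orthant_def inner_axis, auto simp: axis_def)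
qed

lemma nonzero_cost_ces_price:
  assumes "q \<in> orthant" "0 < r" "0 < \<rho>"
  shows "nonzero_cost (ces_price r \<rho> q) j \<longleftrightarrow> nonzero_cost (inner q) j"
  using assms inner_orthant_nonneg[OF assms(1)]
  by (auto simp: nonzero_cost_def ces_price_eq_inner zero_less_mult_iff order.strict_iff_order)

lemma walrasian_eq_ces_price_iff_linear:
  assumes "\<And>i. valuation (v i)" and "\<And>i. homogeneous r (v i)"
    and "0 < r" "r \<le> 1" "0 < \<rho>" "\<rho> \<le> 1" and "q \<in> orthant"
  shows "walrasian_eq v x (ces_price r \<rho> q) \<longleftrightarrow> walrasian_eq (\<lambda>i y. v i y powr \<rho> / \<rho>) x (inner q)"
  using assms by (simp add: walrasian_eq_def demand_ces_price_eq_linear_demand nonzero_cost_ces_price)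

lemma walrasian_eq_imp_allocation: "walrasian_eq u x p \<Longrightarrow> allocation x"
  by (auto simp: walrasian_eq_def allocation_def demand_def)

lemma first_welfare_theorem:
  fixes u :: "'a::finite \<Rightarrow> real^'m::finite \<Rightarrow> real"
  assumes q: "q \<in> orthant" and eq: "walrasian_eq u x (inner q)"
  shows "welfare_max u x"
  unfolding welfare_max_def
proof (intro conjI allI impI)
  show "allocation x"
    using eq by (rule walrasian_eq_imp_allocation)
  fix x' :: "'a \<Rightarrow> real^'m" assume x': "allocation x'"
  have "(\<Sum>i\<in>UNIV. u i (x' i)) \<le> (\<Sum>i\<in>UNIV. u i (x i) - q \<bullet> x i + q \<bullet> x' i)"
  proof (rule sum_mono)
    fix i
    have "x' i \<in> orthant" "x i \<in> demand (u i) (inner q)"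
      using eq x' by (auto simp: walrasian_eq_def allocation_def)
    then show "u i (x' i) \<le> u i (x i) - q \<bullet> x i + q \<bullet> x' i"
      by (force simp: demand_def)
  qed
  also have "\<dots> = (\<Sum>i\<in>UNIV. u i (x i)) - q \<bullet> (\<Sum>i\<in>UNIV. x i) + q \<bullet> (\<Sum>i\<in>UNIV. x' i)"
    by (simp add: sum.distrib sum_subtractf inner_sum_right)
  also have "q \<bullet> (\<Sum>i\<in>UNIV. x' i) \<le> q \<bullet> (\<Sum>i\<in>UNIV. x i)"
    unfolding inner_vec_def
  proof (intro sum_mono)
    fix j
    have "q $ j * (\<Sum>i\<in>UNIV. x' i $ j) \<le> q $ j"
      using q x' by (intro mult_left_le) (auto simp: orthant_def allocation_def)
    also have "q $ j = q $ j * (\<Sum>i\<in>UNIV. x i $ j)"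
      using eq q nonzero_cost_inner[OF q, of j]
      by (cases "q $ j = 0") (auto simp: walrasian_eq_def orthant_def order.strict_iff_order)
    finally show "q $ j \<bullet> (\<Sum>i\<in>UNIV. x' i) $ j \<le> q $ j \<bullet> (\<Sum>i\<in>UNIV. x i) $ j"
      by simp
  qed
  finally show "(\<Sum>i\<in>UNIV. u i (x' i)) \<le> (\<Sum>i\<in>UNIV. u i (x i))"
    by simp
qed

lemma concave_on_compose_mono:
  assumes f: "concave_on S f" and fS: "f ` S \<subseteq> T" and g: "concave_on T g" and mono: "mono_on T g"
  shows "concave_on S (\<lambda>x. g (f x))"
proof -
  have "(1 - s) * g (f x) + s * g (f y) \<le> g (f ((1 - s) *\<^sub>R x + s *\<^sub>R y))"
    if s: "0 < s" "s < 1" and xy: "x \<in> S" "y \<in> S" for s x y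
  proof -
    have fxy: "f x \<in> T" "f y \<in> T" "f ((1 - s) *\<^sub>R x + s *\<^sub>R y) \<in> T"
      using fS xy s concave_on_imp_convex[OF f] by (auto simp: convex_def)
    have "(1 - s) * g (f x) + s * g (f y) \<le> g ((1 - s) * f x + s * f y)"
      using concave_onD[OF g, of s "f x" "f y"] s fxy by simp
    also have "\<dots> \<le> g (f ((1 - s) *\<^sub>R x + s *\<^sub>R y))"
      using concave_onD[OF f, of s x y] concave_on_imp_convex[OF g] s xy fxy
      by (intro mono_onD[OF mono]) (auto simp: convex_def)
    finally show ?thesis .
  qed
  then show ?thesis
    unfolding concave_on_def using concave_on_imp_convex[OF f] by (intro convex_onI) force+
qed

lemma concave_on_powr:
  assumes "0 < \<rho>" "\<rho> \<le> 1"
  shows "concave_on {0..} (\<lambda>t::real. t powr \<rho>)"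
proof (rule concave_on_linorderI)
  fix s x y :: real
  assume s: "0 < s" "s < 1" and xy: "x \<in> {0..}" "y \<in> {0..}" "x < y"
  show "(1 - s) * x powr \<rho> + s * y powr \<rho> \<le> ((1 - s) *\<^sub>R x + s *\<^sub>R y) powr \<rho>"
  proof (cases "x = 0")
    case True
    have "s * y powr \<rho> \<le> s powr \<rho> * y powr \<rho>"
      using s assms powr_mono'[of \<rho> 1 s] by (intro mult_right_mono) auto
    with True s xy show ?thesis
      by (simp add: powr_mult)
  next
    case False
    have "concave_on {0<..} (\<lambda>t::real. t powr \<rho>)"
      using assms
      by (intro f''_le0_imp_concave[where f' = "\<lambda>t. \<rho> * t powr (\<rho> - 1)"
            and f'' = "\<lambda>t. \<rho> * ((\<rho> - 1) * t powr (\<rho> - 1 - 1))"])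
        (auto intro!: derivative_eq_intros simp: mult_le_0_iff)
    with False xy s show ?thesis
      using concave_onD[of "{0<..}" "\<lambda>t. t powr \<rho>" s x y] by simp
  qed
qed simp

lemma concave_on_powr_div:
  assumes "concave_on orthant v" "\<And>y. y \<in> orthant \<Longrightarrow> 0 \<le> v y" "0 < \<rho>" "\<rho> \<le> 1"
  shows "concave_on orthant (\<lambda>y. v y powr \<rho> / \<rho>)"
proof (rule concave_on_cdiv)
  show "concave_on orthant (\<lambda>y. v y powr \<rho>)"
    by (rule concave_on_compose_mono[OF assms(1) _ concave_on_powr[OF assms(3,4)]])
      (use assms(2,3) in \<open>auto simp: mono_on_def powr_mono2\<close>)
qed (use assms in simp)

definition welfare_hypograph :: "('a::finite \<Rightarrow> real^'m::finite \<Rightarrow> real) \<Rightarrow> ((real^'m) \<times> real) set" where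
  "welfare_hypograph u = {(z, t). \<exists>y. (\<forall>i. y i \<in> orthant) \<and>
      (\<forall>j. (\<Sum>i\<in>UNIV. y i $ j) \<le> z $ j) \<and> t \<le> (\<Sum>i\<in>UNIV. u i (y i))}"

lemma welfare_hypographI:
  assumes "\<And>i. y i \<in> orthant" "\<And>j. (\<Sum>i\<in>UNIV. y i $ j) \<le> z $ j" "t \<le> (\<Sum>i\<in>UNIV. u i (y i))"
  shows "(z, t) \<in> welfare_hypograph u"
  using assms unfolding welfare_hypograph_def by blast

lemma welfare_hypograph_mono:
  assumes "(z, t) \<in> welfare_hypograph u" "\<And>j. z $ j \<le> z' $ j" "t' \<le> t"
  shows "(z', t') \<in> welfare_hypograph u"
  using assms unfolding welfare_hypograph_def by (blast intro: order.trans)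

lemma convex_welfare_hypograph:
  fixes u :: "'a::finite \<Rightarrow> real^'m::finite \<Rightarrow> real"
  assumes conc: "\<And>i. concave_on orthant (u i)"
  shows "convex (welfare_hypograph u)"
proof (rule convexI)
  fix w w' :: "(real^'m) \<times> real" and a b :: real
  assume "w \<in> welfare_hypograph u" "w' \<in> welfare_hypograph u" and ab: "0 \<le> a" "0 \<le> b" "a + b = 1"
  then obtain y y' where
    y: "\<forall>i. y i \<in> orthant" "\<forall>j. (\<Sum>i\<in>UNIV. y i $ j) \<le> fst w $ j" "snd w \<le> (\<Sum>i\<in>UNIV. u i (y i))" and
    y': "\<forall>i. y' i \<in> orthant" "\<forall>j. (\<Sum>i\<in>UNIV. y' i $ j) \<le> fst w' $ j" "snd w' \<le> (\<Sum>i\<in>UNIV. u i (y' i))"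
    unfolding welfare_hypograph_def by auto
  have a: "a = 1 - b"
    using ab by simp
  have mix: "a * u i (y i) + b * u i (y' i) \<le> u i (a *\<^sub>R y i + b *\<^sub>R y' i)" for i
    unfolding a using concave_onD[OF conc[of i], of b "y i" "y' i"] y(1) y'(1) ab by simp
  have "a * snd w + b * snd w' \<le> a * (\<Sum>i\<in>UNIV. u i (y i)) + b * (\<Sum>i\<in>UNIV. u i (y' i))"
    using y(3) y'(3) ab by (intro add_mono mult_left_mono)
  also have "\<dots> = (\<Sum>i\<in>UNIV. a * u i (y i) + b * u i (y' i))"
    by (simp add: sum.distrib sum_distrib_left)
  also have "\<dots> \<le> (\<Sum>i\<in>UNIV. u i (a *\<^sub>R y i + b *\<^sub>R y' i))"
    by (rule sum_mono) (rule mix)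
  finally have welfare: "snd (a *\<^sub>R w + b *\<^sub>R w') \<le> (\<Sum>i\<in>UNIV. u i (a *\<^sub>R y i + b *\<^sub>R y' i))"
    by simp
  have "(\<Sum>i\<in>UNIV. (a *\<^sub>R y i + b *\<^sub>R y' i) $ j) = a * (\<Sum>i\<in>UNIV. y i $ j) + b * (\<Sum>i\<in>UNIV. y' i $ j)" for j
    by (simp add: sum.distrib sum_distrib_left)
  also have "\<dots> j \<le> fst (a *\<^sub>R w + b *\<^sub>R w') $ j" for j
    using y(2) y'(2) ab by (simp add: add_mono mult_left_mono)
  finally have resources: "(\<Sum>i\<in>UNIV. (a *\<^sub>R y i + b *\<^sub>R y' i) $ j) \<le> fst (a *\<^sub>R w + b *\<^sub>R w') $ j" for j .
  have "a *\<^sub>R y i + b *\<^sub>R y' i \<in> orthant" for i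
    using y(1) y'(1) ab by (simp add: orthant_def)
  then have "(fst (a *\<^sub>R w + b *\<^sub>R w'), snd (a *\<^sub>R w + b *\<^sub>R w')) \<in> welfare_hypograph u"
    using resources welfare by (rule welfare_hypographI)
  then show "a *\<^sub>R w + b *\<^sub>R w' \<in> welfare_hypograph u"
    by (simp only: prod.collapse)
qed

lemma nonpos_if_multiples_bounded:
  fixes k M :: real
  assumes "\<And>s. 0 \<le> s \<Longrightarrow> s * k \<le> M"
  shows "k \<le> 0"
proof (rule ccontr)
  assume "\<not> k \<le> 0"
  then have "(\<bar>M\<bar> + 1) / k * k \<le> M"
    by (intro assms) simp
  with \<open>\<not> k \<le> 0\<close> show False
    by simp
qed

lemma vec_eq_0_if_nonpos_sum_nonneg:
  fixes p :: "real^'m::finite"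
  assumes "\<And>j. p $ j \<le> 0" "0 \<le> (\<Sum>j\<in>UNIV. p $ j)"
  shows "p = 0"
  using assms sum_nonneg_eq_0_iff[of UNIV "\<lambda>j. - p $ j"]
  by (simp add: vec_eq_iff sum_negf order.antisym sum_nonpos)

lemma convex_strictly_below_one: "convex {z :: real^'m::finite. \<forall>j. z $ j < 1}"
proof -
  have "{z :: real^'m. \<forall>j. z $ j < 1} = (\<Inter>j. {z. axis j 1 \<bullet> z < 1})"
    by (auto simp: inner_axis')
  then show ?thesis
    by (simp add: convex_INT convex_halfspace_lt)
qed

text \<open>\<open>A\<close> is separated from the pairs that use strictly less than the unit supply and exceed \<open>F\<close>.
  Monotonicity of \<open>A\<close> makes the normal nonpositive, and the Slater point \<open>(0, t\<^sub>0)\<close> makes its welfare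
  coordinate positive, so it can be normalised to \<open>(-q, 1)\<close>.\<close>
lemma slater_separation:
  fixes A :: "((real^'m::finite) \<times> real) set"
  assumes convA: "convex A"
    and down: "\<And>z t s. (z, t) \<in> A \<Longrightarrow> 0 \<le> s \<Longrightarrow> (z, t - s) \<in> A"
    and up: "\<And>z t s j. (z, t) \<in> A \<Longrightarrow> 0 \<le> s \<Longrightarrow> (z + s *\<^sub>R axis j 1, t) \<in> A"
    and slater: "(0, t\<^sub>0) \<in> A"
    and bound: "\<And>z t. (z, t) \<in> A \<Longrightarrow> \<forall>j. z $ j < 1 \<Longrightarrow> t \<le> F"
  obtains q c where "q \<in> orthant" "\<And>z t. (z, t) \<in> A \<Longrightarrow> t - q \<bullet> z \<le> c"
    "\<And>z t. \<forall>j. z $ j < 1 \<Longrightarrow> F < t \<Longrightarrow> c \<le> t - q \<bullet> z"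
proof -
  define B where "B = {z :: real^'m. \<forall>j. z $ j < 1} \<times> {F<..}"
  have "convex B"
    unfolding B_def by (intro convex_Times convex_strictly_below_one convex_real_interval)
  moreover have "(0, F + 1) \<in> B"
    by (simp add: B_def)
  moreover have "A \<inter> B = {}"
    using bound by (force simp: B_def)
  moreover have "A \<noteq> {}"
    using slater by blast
  ultimately obtain a b where "a \<noteq> 0" "\<forall>w\<in>A. a \<bullet> w \<le> b" "\<forall>w\<in>B. b \<le> a \<bullet> w"
    using separating_hyperplane_sets[OF convA] by (metis empty_iff)
  then obtain p \<alpha> where p: "(p, \<alpha>) \<noteq> 0"
    and HA: "\<And>z t. (z, t) \<in> A \<Longrightarrow> p \<bullet> z + \<alpha> * t \<le> b"
    and HB: "\<And>z t. \<forall>j. z $ j < 1 \<Longrightarrow> F < t \<Longrightarrow> b \<le> p \<bullet> z + \<alpha> * t"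
    by (cases a) (fastforce simp: B_def)
  have p_nonpos: "p $ j \<le> 0" for j
    using HA[OF up[OF slater]] by (intro nonpos_if_multiples_bounded[of _ "b - \<alpha> * t\<^sub>0"]) (force simp: inner_axis algebra_simps)
  have "- \<alpha> \<le> 0"
    using HA[OF down[OF slater]] by (intro nonpos_if_multiples_bounded[of _ "b - \<alpha> * t\<^sub>0"]) (auto simp: algebra_simps)
  moreover have "\<alpha> \<noteq> 0"
  proof
    assume "\<alpha> = 0"
    then have "0 \<le> p \<bullet> (\<chi> j. 1 / 2)"
      using HA[OF slater] HB[of "\<chi> j. 1 / 2" "F + 1"] by auto
    then have "p = 0"
      using p_nonpos by (intro vec_eq_0_if_nonpos_sum_nonneg) (auto simp: inner_vec_def sum_divide_distrib[symmetric])
    with p \<open>\<alpha> = 0\<close> show False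
      by (simp add: zero_prod_def)
  qed
  ultimately have "0 < \<alpha>"
    by simp
  have normalise: "t - (- p /\<^sub>R \<alpha>) \<bullet> z = (p \<bullet> z + \<alpha> * t) / \<alpha>" for z t
    using \<open>0 < \<alpha>\<close> by (simp add: field_simps)
  show thesis
  proof
    show "- p /\<^sub>R \<alpha> \<in> orthant"
      using p_nonpos \<open>0 < \<alpha>\<close> by (auto simp: orthant_def mult_nonneg_nonpos)
    show "t - (- p /\<^sub>R \<alpha>) \<bullet> z \<le> b / \<alpha>" if "(z, t) \<in> A" for z t
      unfolding normalise using HA[OF that] \<open>0 < \<alpha>\<close> by (intro divide_right_mono) auto
    show "b / \<alpha> \<le> t - (- p /\<^sub>R \<alpha>) \<bullet> z" if "\<forall>j. z $ j < 1" "F < t" for z t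
      unfolding normalise using HB[OF that] \<open>0 < \<alpha>\<close> by (intro divide_right_mono) auto
  qed
qed

lemma bound_at_full_supply:
  assumes q: "q \<in> orthant" and bound: "\<And>z t. \<forall>j. z $ j < 1 \<Longrightarrow> F < t \<Longrightarrow> c \<le> t - q \<bullet> z"
  shows "c \<le> F - (\<Sum>j\<in>UNIV. q $ j)"
proof -
  define Q where "Q = (\<Sum>j\<in>UNIV. q $ j)"
  have "0 \<le> Q"
    using q by (auto simp: Q_def orthant_def intro: sum_nonneg)
  have "c \<le> F - Q"
  proof (rule field_le_epsilon)
    fix e :: real assume "0 < e"
    define \<delta> where "\<delta> = min (1 / 2) (e / (1 + Q))"
    have \<delta>: "0 < \<delta>" "\<delta> < 1"
      using \<open>0 < e\<close> \<open>0 \<le> Q\<close> by (auto simp: \<delta>_def)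
    have "\<delta> \<le> e / (1 + Q)"
      by (simp add: \<delta>_def)
    then have "\<delta> * (1 + Q) \<le> e"
      using \<open>0 \<le> Q\<close> by (simp add: pos_le_divide_eq)
    have "c \<le> F + \<delta> - q \<bullet> (\<chi> j. 1 - \<delta>)"
      using \<delta> by (intro bound) auto
    also have "q \<bullet> (\<chi> j. 1 - \<delta>) = (1 - \<delta>) * Q"
      by (simp add: Q_def inner_vec_def sum_distrib_left mult.commute)
    finally show "c \<le> F - Q + e"
      using \<open>\<delta> * (1 + Q) \<le> e\<close> by (simp add: algebra_simps)
  qed
  then show ?thesis
    by (simp add: Q_def)
qed

lemma lagrange_multiplier_exists:
  fixes u :: "'a::finite \<Rightarrow> real^'m::finite \<Rightarrow> real"
  assumes conc: "\<And>i. concave_on orthant (u i)"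
    and bound: "\<And>y. allocation y \<Longrightarrow> (\<Sum>i\<in>UNIV. u i (y i)) \<le> F"
  obtains q where "q \<in> orthant"
    "\<And>y. (\<And>i. y i \<in> orthant) \<Longrightarrow> (\<Sum>i\<in>UNIV. u i (y i)) - q \<bullet> (\<Sum>i\<in>UNIV. y i) \<le> F - (\<Sum>j\<in>UNIV. q $ j)"
proof -
  obtain q c where q: "q \<in> orthant"
    and HA: "\<And>z t. (z, t) \<in> welfare_hypograph u \<Longrightarrow> t - q \<bullet> z \<le> c"
    and HB: "\<And>z t. \<forall>j. z $ j < 1 \<Longrightarrow> F < t \<Longrightarrow> c \<le> t - q \<bullet> z"
  proof (rule slater_separation[OF convex_welfare_hypograph[OF conc]])
    show "(z, t - s) \<in> welfare_hypograph u" if "(z, t) \<in> welfare_hypograph u" "0 \<le> s" for z t s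
      using that by (auto elim: welfare_hypograph_mono)
    show "(z + s *\<^sub>R axis j 1, t) \<in> welfare_hypograph u" if "(z, t) \<in> welfare_hypograph u" "0 \<le> s"
      for z t s j
      using that by (auto elim!: welfare_hypograph_mono simp: axis_def)
    show "(0, \<Sum>i\<in>UNIV. u i 0) \<in> welfare_hypograph u"
      by (rule welfare_hypographI[of "\<lambda>i. 0"]) (auto simp: orthant_def)
    fix z :: "real^'m" and t assume "(z, t) \<in> welfare_hypograph u" "\<forall>j. z $ j < 1"
    then obtain y where y: "\<And>i. y i \<in> orthant" "\<And>l. (\<Sum>i\<in>UNIV. y i $ l) \<le> z $ l"
      "t \<le> (\<Sum>i\<in>UNIV. u i (y i))" and "\<And>l. z $ l < 1"
      unfolding welfare_hypograph_def by blast
    then have "allocation y"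
      unfolding allocation_def by (meson less_imp_le order.trans)
    with y(3) show "t \<le> F"
      using bound by (meson order.trans)
  qed (rule that)
  have "c \<le> F - (\<Sum>j\<in>UNIV. q $ j)"
    using q HB by (rule bound_at_full_supply)
  show thesis
  proof (rule that[OF q])
    fix y :: "'a \<Rightarrow> real^'m" assume "\<And>i. y i \<in> orthant"
    then have "(\<Sum>i\<in>UNIV. y i, \<Sum>i\<in>UNIV. u i (y i)) \<in> welfare_hypograph u"
      by (intro welfare_hypographI) auto
    with \<open>c \<le> F - (\<Sum>j\<in>UNIV. q $ j)\<close>
    show "(\<Sum>i\<in>UNIV. u i (y i)) - q \<bullet> (\<Sum>i\<in>UNIV. y i) \<le> F - (\<Sum>j\<in>UNIV. q $ j)"
      using HA by fastforce
  qed
qed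

lemma sum_fun_upd:
  fixes f :: "'a \<Rightarrow> 'b::ab_group_add"
  assumes "finite A" "i \<in> A"
  shows "sum (f(i := a)) A = sum f A - f i + a"
proof -
  have "sum (f(i := a)) A = a + sum f (A - {i})"
    using assms by (simp add: sum.remove)
  also have "sum f (A - {i}) = sum f A - f i"
    using assms by (simp add: sum_diff1)
  finally show ?thesis
    by (simp add: algebra_simps)
qed

lemma complementary_slackness:
  fixes q S :: "real^'m::finite"
  assumes q: "q \<in> orthant" and S: "\<And>j. S $ j \<le> 1" and dual: "(\<Sum>j\<in>UNIV. q $ j) \<le> q \<bullet> S"
  shows "\<And>j. 0 < q $ j \<Longrightarrow> S $ j = 1" and "q \<bullet> S = (\<Sum>j\<in>UNIV. q $ j)"
proof -
  have nonneg: "0 \<le> q $ j * (1 - S $ j)" for j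
    using q S[of j] by (simp add: orthant_def)
  have "(\<Sum>j\<in>UNIV. q $ j * (1 - S $ j)) = (\<Sum>j\<in>UNIV. q $ j) - q \<bullet> S"
    by (simp add: inner_vec_def algebra_simps sum_subtractf)
  with dual have "(\<Sum>j\<in>UNIV. q $ j * (1 - S $ j)) = 0"
    using sum_nonneg[of UNIV "\<lambda>j. q $ j * (1 - S $ j)", OF nonneg] by linarith
  then have slack: "q $ j * (1 - S $ j) = 0" for j
    using sum_nonneg_eq_0_iff[of UNIV "\<lambda>j. q $ j * (1 - S $ j)"] nonneg by simp
  then show "S $ j = 1" if "0 < q $ j" for j
    using that by (metis less_irrefl mult_eq_0_iff right_minus_eq)
  show "q \<bullet> S = (\<Sum>j\<in>UNIV. q $ j)"
    unfolding inner_vec_def using slack by (intro sum.cong) (auto simp: algebra_simps)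
qed

lemma second_welfare_theorem:
  fixes u :: "'a::finite \<Rightarrow> real^'m::finite \<Rightarrow> real"
  assumes conc: "\<And>i. concave_on orthant (u i)" and max: "welfare_max u x"
  obtains q where "q \<in> orthant" "walrasian_eq u x (inner q)"
proof -
  have x: "\<And>i. x i \<in> orthant" "\<And>j. (\<Sum>i\<in>UNIV. x i $ j) \<le> 1"
    using max by (auto simp: welfare_max_def allocation_def)
  obtain q where q: "q \<in> orthant" and lagrangian:
    "\<And>y. (\<And>i. y i \<in> orthant) \<Longrightarrow>
      (\<Sum>i\<in>UNIV. u i (y i)) - q \<bullet> (\<Sum>i\<in>UNIV. y i) \<le> (\<Sum>i\<in>UNIV. u i (x i)) - (\<Sum>j\<in>UNIV. q $ j)"
    using lagrange_multiplier_exists[of u "\<Sum>i\<in>UNIV. u i (x i)"] conc max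
    unfolding welfare_max_def by blast
  define S where "S = (\<Sum>i\<in>UNIV. x i)"
  have "(\<Sum>j\<in>UNIV. q $ j) \<le> q \<bullet> S"
    using lagrangian[of x] x(1) by (simp add: S_def)
  note slackness = complementary_slackness[OF q x(2)[unfolded sum_component[symmetric], folded S_def] this]
  have "x i \<in> demand (u i) (inner q)" for i
    unfolding demand_def
  proof (intro CollectI conjI ballI x)
    fix z :: "real^'m" assume "z \<in> orthant"
    then have "(\<Sum>k\<in>UNIV. u k ((x(i := z)) k)) - q \<bullet> (\<Sum>k\<in>UNIV. (x(i := z)) k)
        \<le> (\<Sum>k\<in>UNIV. u k (x k)) - (\<Sum>j\<in>UNIV. q $ j)"
      using x(1) by (intro lagrangian) auto
    moreover have "(\<Sum>k\<in>UNIV. u k ((x(i := z)) k)) = (\<Sum>k\<in>UNIV. u k (x k)) - u i (x i) + u i z"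
    proof -
      have "(\<lambda>k. u k ((x(i := z)) k)) = (\<lambda>k. u k (x k))(i := u i z)"
        by auto
      then show ?thesis
        using sum_fun_upd[of UNIV i "\<lambda>k. u k (x k)" "u i z"] by (simp only:) simp
    qed
    moreover have "(\<Sum>k\<in>UNIV. (x(i := z)) k) = S - x i + z"
      using sum_fun_upd[of UNIV i x z] by (simp add: S_def)
    ultimately show "u i z - q \<bullet> z \<le> u i (x i) - q \<bullet> x i"
      by (simp add: slackness(2) inner_diff_right inner_add_right)
  qed
  moreover have "(\<Sum>i\<in>UNIV. x i $ j) = 1" if "nonzero_cost (inner q) j" for j
    using slackness(1)[of j] nonzero_cost_inner[OF q] that by (simp add: S_def)
  ultimately show thesis
    using that q x(2) by (simp add: walrasian_eq_def)
qed

section \<open>First-order conditions\<close>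

lemma right_derivative_nonpos_at_max:
  fixes f :: "real \<Rightarrow> real"
  assumes der: "(f has_real_derivative D) (at a within {a..})" and max: "\<And>t. a \<le> t \<Longrightarrow> f t \<le> f a"
  shows "D \<le> 0"
proof -
  have "((\<lambda>t. (f t - f a) / (t - a)) \<longlongrightarrow> D) (at_right a)"
    using der unfolding has_field_derivative_iff at_within_Ici_at_right .
  moreover have "eventually (\<lambda>t. (f t - f a) / (t - a) \<le> 0) (at_right a)"
    using eventually_at_right_less[of a] by eventually_elim (use max in \<open>simp add: divide_nonpos_pos\<close>)
  ultimately show ?thesis
    by (rule tendsto_upperbound) simp
qed

lemma orthant_add_axis: "x \<in> orthant \<Longrightarrow> - (x $ j) \<le> t \<Longrightarrow> x + t *\<^sub>R axis j 1 \<in> orthant"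
  by (auto simp: orthant_def axis_def)

lemma has_real_derivative_along_axis:
  fixes v :: "real^'m::finite \<Rightarrow> real"
  assumes der: "(v has_derivative D) (at x within orthant)" and x: "x \<in> orthant"
  shows "((\<lambda>t. v (x + t *\<^sub>R axis j 1)) has_real_derivative D (axis j 1)) (at 0 within {- (x $ j)..})"
proof -
  have "(v has_derivative D) (at (x + 0 *\<^sub>R axis j 1) within (\<lambda>t. x + t *\<^sub>R axis j 1) ` {- (x $ j)..})"
    using x by (auto intro: has_derivative_subset[OF der] orthant_add_axis)
  moreover have "((\<lambda>t. x + t *\<^sub>R axis j 1) has_derivative (\<lambda>t. t *\<^sub>R axis j 1)) (at 0 within {- (x $ j)..})"
    by (auto intro!: derivative_eq_intros)
  ultimately have "((\<lambda>t. v (x + t *\<^sub>R axis j 1)) has_derivative (\<lambda>t. D (t *\<^sub>R axis j 1))) (at 0 within {- (x $ j)..})"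
    using diff_chain_within by (fastforce simp: comp_def)
  moreover have "(\<lambda>t. D (t *\<^sub>R axis j 1)) = (*) (D (axis j 1))"
    using linear_cmul[OF has_derivative_linear[OF der]] by (simp add: fun_eq_iff mult.commute)
  ultimately show ?thesis
    by (simp add: has_field_derivative_def)
qed

lemma demand_inner_first_order:
  assumes x: "x \<in> demand u (inner q)"
    and der: "((\<lambda>t. u (x + t *\<^sub>R axis j 1)) has_real_derivative d) (at 0 within {- (x $ j)..})"
  shows "d \<le> q $ j" and "0 < x $ j \<Longrightarrow> d = q $ j"
proof -
  define \<phi> where "\<phi> t = u (x + t *\<^sub>R axis j 1) - t * q $ j" for t
  have max: "\<phi> t \<le> \<phi> 0" if "- (x $ j) \<le> t" for t
  proof -
    have "u (x + t *\<^sub>R axis j 1) - q \<bullet> (x + t *\<^sub>R axis j 1) \<le> u x - q \<bullet> x"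
      using x orthant_add_axis[OF _ that] by (simp add: demand_def)
    then show ?thesis
      by (simp add: \<phi>_def inner_add_right inner_axis)
  qed
  have der\<phi>: "(\<phi> has_real_derivative d - q $ j) (at 0 within {- (x $ j)..})"
    unfolding \<phi>_def using der by (auto intro!: derivative_eq_intros)
  have "0 \<le> x $ j"
    using x by (simp add: demand_def orthant_def)
  then have "d - q $ j \<le> 0"
    using max by (intro right_derivative_nonpos_at_max[OF DERIV_subset[OF der\<phi>]]) auto
  then show "d \<le> q $ j"
    by simp
  assume "0 < x $ j"
  then have "at 0 within {- (x $ j)<..} = at 0"
    by (intro at_within_open) auto
  moreover have "{- (x $ j)<..} \<subseteq> {- (x $ j)..}"
    by auto
  ultimately have "(\<phi> has_real_derivative d - q $ j) (at 0)"
    using DERIV_subset[OF der\<phi>] by metis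
  with \<open>0 < x $ j\<close> max have "d - q $ j = 0"
    by (intro DERIV_local_max[where d = "x $ j"]) auto
  then show "d = q $ j"
    by simp
qed

lemma partial_deriv_if_along_axis:
  assumes "((\<lambda>t. v (x + t *\<^sub>R axis j 1)) has_real_derivative d) (at 0 within {- (x $ j)..})"
    and "x \<in> orthant"
  shows "partial_deriv v x j d"
  unfolding partial_deriv_def by (rule DERIV_subset[OF assms(1)]) (use assms(2) in \<open>auto simp: orthant_def\<close>)

lemma partial_deriv_exists:
  fixes v :: "real^'m::finite \<Rightarrow> real"
  assumes x: "x \<in> orthant" and diff: "x \<noteq> 0 \<Longrightarrow> v differentiable (at x within orthant)"
    and hom: "x = 0 \<Longrightarrow> homogeneous 1 v"
  obtains d where "partial_deriv v x j d"
proof (cases "x = 0")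
  case True
  have "((\<lambda>t. t * v (axis j 1)) has_real_derivative v (axis j 1)) (at 0 within {0..})"
    by (auto intro!: derivative_eq_intros)
  then have "partial_deriv v 0 j (v (axis j 1))"
    unfolding partial_deriv_def
  proof (rule has_field_derivative_transform_within[where d = 1])
    show "t * v (axis j 1) = v (0 + t *\<^sub>R axis j 1)" if "t \<in> {0..}" for t
      using hom True that by (simp add: homogeneous_def orthant_def axis_def)
  qed auto
  with True that show thesis
    by blast
next
  case False
  then obtain D where "(v has_derivative D) (at x within orthant)"
    using diff by (auto simp: differentiable_def)
  then show thesis
    using that partial_deriv_if_along_axis has_real_derivative_along_axis x by blast
qed

text \<open>Where \<open>v x = 0\<close> the conditions degenerate, since Isabelle's \<open>0 powr (\<rho> - 1)\<close> is \<open>0\<close>: they then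
  say that \<open>x\<close> only uses goods with zero price.\<close>
lemma linear_demand_kkt:
  fixes v :: "real^'m::finite \<Rightarrow> real"
  assumes val: "valuation v" and hom: "homogeneous r v"
    and r: "0 < r" "r \<le> 1" and \<rho>: "0 < \<rho>" "\<rho> \<le> 1" and q: "q \<in> orthant"
    and x: "x \<in> demand (\<lambda>y. v y powr \<rho> / \<rho>) (inner q)"
    and diff: "x \<noteq> 0 \<Longrightarrow> v differentiable (at x within orthant)"
  shows "\<exists>d. partial_deriv v x j d \<and> v x powr (\<rho> - 1) * d \<le> q $ j \<and>
    (0 < x $ j \<longrightarrow> v x powr (\<rho> - 1) * d = q $ j)"
proof -
  have v_nonneg: "\<And>y. y \<in> orthant \<Longrightarrow> 0 \<le> v y" and "v 0 = 0" and v_pos: "\<exists>y\<in>orthant. 0 < v y"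
    using val unfolding valuation_def by (auto simp: order.strict_iff_order)
  note hom_L = homogeneous_powr_div[OF hom v_nonneg] homogeneous_inner
  have x_orthant: "x \<in> orthant" and "0 \<le> q $ j"
    using x q by (auto simp: demand_def orthant_def)
  show ?thesis
  proof (cases "v x = 0")
    case True
    have "1 \<le> r * \<rho>"
      using demand_zero_value_degree_le[OF hom_L _ inner_orthant_nonneg[OF q] x] True v_pos \<rho> by fastforce
    then have "homogeneous 1 v"
      using mult_lt_1_unless_both_1[OF r \<rho>] hom by fastforce
    then obtain d where "partial_deriv v x j d"
      using partial_deriv_exists[OF x_orthant diff] by blast
    moreover have "q $ j * x $ j \<le> q \<bullet> x"
      unfolding inner_vec_def inner_real_def using q x_orthant
      by (intro member_le_sum[where f = "\<lambda>i. q $ i * x $ i"]) (auto simp: orthant_def)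
    moreover have "q \<bullet> x = 0"
      using demand_balance[OF hom_L x] \<rho> True by simp
    ultimately show ?thesis
      using True \<open>0 \<le> q $ j\<close> \<rho> by (auto simp: mult_le_0_iff)
  next
    case False
    then have "0 < v x" "x \<noteq> 0"
      using v_nonneg[OF x_orthant] \<open>v 0 = 0\<close> by auto
    then obtain D where "(v has_derivative D) (at x within orthant)"
      using diff by (auto simp: differentiable_def)
    from has_real_derivative_along_axis[OF this x_orthant]
    have der: "((\<lambda>t. v (x + t *\<^sub>R axis j 1)) has_real_derivative D (axis j 1)) (at 0 within {- (x $ j)..})" .
    have "((\<lambda>t. v (x + t *\<^sub>R axis j 1) powr \<rho> / \<rho>) has_real_derivative
        v x powr (\<rho> - 1) * D (axis j 1)) (at 0 within {- (x $ j)..})"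
      using \<open>0 < v x\<close> \<rho>
      by (auto intro!: derivative_eq_intros DERIV_chain2[OF _ der] simp: field_simps powr_diff)
    with partial_deriv_if_along_axis[OF der x_orthant] show ?thesis
      using demand_inner_first_order[OF x] by blast
  qed
qed

theorem theorem1:
  fixes v :: "'a::finite \<Rightarrow> real^'m::finite \<Rightarrow> real"
    and r \<rho> :: real
    and x :: "'a \<Rightarrow> real^'m"
  assumes r: "0 < r" "r \<le> 1"
    and val: "\<And>i. valuation (v i)"
    and hom: "\<And>i. homogeneous r (v i)"
    and conc: "\<And>i. concave_on orthant (v i)"
    and diff: "\<And>i y. y \<in> orthant \<Longrightarrow> y \<noteq> 0 \<Longrightarrow> v i differentiable (at y within orthant)"
    and rho: "0 < \<rho>" "\<rho> \<le> 1"
    and alloc: "allocation x"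
  shows "(x \<in> Psi v \<rho> \<longleftrightarrow> (\<exists>q\<in>orthant. walrasian_eq v x (ces_price r \<rho> q)))
         \<and> (\<forall>q\<in>orthant. walrasian_eq v x (ces_price r \<rho> q) \<longrightarrow> optimal_lagrange v \<rho> q)"
proof -
  define u where "u = (\<lambda>i y. v i y powr \<rho> / \<rho>)"
  have conc_u: "concave_on orthant (u i)" for i
    using val concave_on_powr_div[OF conc _ rho] unfolding u_def valuation_def by blast
  have "x \<in> Psi v \<rho> \<longleftrightarrow> welfare_max u x"
    using Psi_iff_welfare_max[OF rho(1)] by (simp add: u_def)
  also have "\<dots> \<longleftrightarrow> (\<exists>q\<in>orthant. walrasian_eq u x (inner q))"
    using first_welfare_theorem second_welfare_theorem[of u, OF conc_u] by blast
  moreover have "optimal_lagrange v \<rho> q" if q: "q \<in> orthant" and eq: "walrasian_eq u x (inner q)" for q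
    unfolding optimal_lagrange_def
  proof (intro conjI exI[of _ x] allI impI q)
    show "P_optimal v \<rho> x"
      using first_welfare_theorem[OF q eq] by (simp add: P_optimal_iff_welfare_max[OF rho(1)] u_def)
    show "\<exists>d. partial_deriv (v i) (x i) j d \<and> v i (x i) powr (\<rho> - 1) * d \<le> q $ j \<and>
        (0 < x i $ j \<longrightarrow> v i (x i) powr (\<rho> - 1) * d = q $ j)" for i j
      using eq diff walrasian_eq_imp_allocation[OF eq]
      by (intro linear_demand_kkt[OF val hom r rho q]) (auto simp: walrasian_eq_def u_def allocation_def)
    show "q $ j = 0" if "(\<Sum>i\<in>UNIV. x i $ j) < 1" for j
      using eq that q nonzero_cost_inner[OF q, of j]
      by (auto simp: walrasian_eq_def orthant_def order.strict_iff_order)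
  qed
  ultimately show ?thesis
    using walrasian_eq_ces_price_iff_linear[of v, OF val hom r rho] by (simp add: u_def)
qed

end
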